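(* Let $p=(p_1,p_2,p_3,p_4)$ be an ordered quadruple of distinct points of $\partial\mathbf H^2_{\mathbb C}$ and let $X_1=X(p_1,p_2,p_3,p_4)$, $X_2=X(p_1,p_3,p_2,p_4)$, $A=\mathbb A(p_1,p_2,p_3)$. Then all four points lie on a common $\mathbb R$-circle if and only if $A=0$ and $X_1,X_2$ are positive real numbers satisfying $$-2(X_1+X_2)-2X_1X_2+X_1^2+X_2^2+1=0.$$
   Context: $\mathbb C^{2,1}$ is $\mathbb C^3$ with Hermitian form $\langle Z,W\rangle=z_1\overline{w}_3+z_2\overline{w}_2+z_3\overline{w}_1$; $\mathbf H^2_{\mathbb C}$ and $\partial\mathbf H^2_{\mathbb C}$ are the negative and null lines in $\mathbb P\mathbb C^2$. An $\mathbb R$-circle is the intersection of $\partial\mathbf H^2_{\mathbb C}$ with the closure of a totally real totally geodesic 2-plane (a copy of $\mathbf H^2_{\mathbb R}$) in $\mathbf H^2_{\mathbb C}$. With null lifts $P_i$: $X(p_1,p_2,p_3,p_4)=\dfrac{\langle P_3,P_1\rangle\langle P_4,P_2\rangle}{\langle P_4,P_1\rangle\langle P_3,P_2\rangle}$ and $\mathbb A(p_1,p_2,p_3)=\arg\bigl(-\langle P_1,P_2\rangle\langle P_2,P_3\rangle\langle P_3,P_1\rangle\bigr)\in[-\pi/2,\pi/2]$. *)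

theory Defs
  imports "HOL-Analysis.Analysis"
begin

definition herm :: "complex^3 \<Rightarrow> complex^3 \<Rightarrow> complex" where
  "herm Z W = Z$1 * cnj (W$3) + Z$2 * cnj (W$2) + Z$3 * cnj (W$1)"

text \<open>A null lift of a point of the boundary of complex hyperbolic 2-space.\<close>
definition null_lift :: "complex^3 \<Rightarrow> bool" where
  "null_lift P \<longleftrightarrow> P \<noteq> 0 \<and> herm P P = 0"

definition same_point :: "complex^3 \<Rightarrow> complex^3 \<Rightarrow> bool" where
  "same_point P Q \<longleftrightarrow> (\<exists>c. c \<noteq> 0 \<and> Q = c *s P)"

definition unitary21 :: "complex^3^3 \<Rightarrow> bool" where
  "unitary21 g \<longleftrightarrow> (\<forall>V W. herm (g *v V) (g *v W) = herm V W)"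

definition real_vec :: "complex^3 \<Rightarrow> bool" where
  "real_vec v \<longleftrightarrow> (\<forall>i. v$i \<in> \<real>)"

text \<open>The standard totally real totally geodesic plane is the projectivisation of the
  negative vectors of R^3 (on which the form is real); its closure meets the boundary in
  the projectivised null nonzero real vectors.  Every totally real totally geodesic 2-plane
  is the image of it under an element g of U(2,1), so the R-circle determined by g
  consists of the points with a lift g v, v a nonzero null real vector.\<close>
definition on_Rcircle :: "complex^3^3 \<Rightarrow> complex^3 \<Rightarrow> bool" where
  "on_Rcircle g P \<longleftrightarrow>
     (\<exists>v. real_vec v \<and> v \<noteq> 0 \<and> herm v v = 0 \<and> same_point (g *v v) P)"

definition cross_ratio :: "complex^3 \<Rightarrow> complex^3 \<Rightarrow> complex^3 \<Rightarrow> complex^3 \<Rightarrow> complex" where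
  "cross_ratio P1 P2 P3 P4 =
     (herm P3 P1 * herm P4 P2) / (herm P4 P1 * herm P3 P2)"

text \<open>Cartan's angular invariant (Isabelle Arg takes values in (-pi,pi]; for
  distinct boundary points the value lies in [-pi/2,pi/2]).\<close>
definition cartan :: "complex^3 \<Rightarrow> complex^3 \<Rightarrow> complex^3 \<Rightarrow> real" where
  "cartan P1 P2 P3 = Arg (- (herm P1 P2 * herm P2 P3 * herm P3 P1))"

end

theory Submission
  imports Defs
begin

text \<open>Both the Cartan invariant and the cross-ratios are unchanged when the lifts are rescaled or
  moved by an element of U(2,1).  Points on the R-circle of g have lifts g v with v real and null;
  for the form 2 x z + y^2 the coordinate x - z is a time function on the real light cone, and two
  real null vectors pair negatively exactly when they lie in the same half of the cone.  Hence the
  triple product of the pairings of three such vectors is negative, i.e. A = 0, and the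
  cross-ratios, computed from real pairings, are real.

  Conversely, if A = 0 then P1, P2, P3 can be normalised to (1,0,0), (0,0,1) and
  (-r, sqrt (2 r), 1) with r > 0, and P4 to (\<xi>, \<eta>, 1).  Then X1 and X2 are affine in \<xi> and \<eta>,
  so real cross-ratios make \<xi> and \<eta> real: all four points lie on the standard R-circle of
  this frame.  Finally the null condition on P4 turns into (1 + X1 - X2)^2 = 4 X1, which is the
  stated quadratic relation together with positivity of X1 and X2.\<close>

lemma herm_add_left: "herm (x + y) z = herm x z + herm y z"
  by (simp add: herm_def algebra_simps)

lemma herm_add_right: "herm z (x + y) = herm z x + herm z y"
  by (simp add: herm_def algebra_simps)

lemma herm_diff_left: "herm (x - y) z = herm x z - herm y z"
  by (simp add: herm_def algebra_simps)

lemma herm_diff_right: "herm z (x - y) = herm z x - herm z y"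
  by (simp add: herm_def algebra_simps)

lemma herm_scale_left: "herm (c *s x) y = c * herm x y"
  by (simp add: herm_def algebra_simps)

lemma herm_scale_right: "herm x (c *s y) = cnj c * herm x y"
  by (simp add: herm_def algebra_simps)

lemma herm_zero_left [simp]: "herm 0 x = 0"
  by (simp add: herm_def)

lemmas herm_sesquilinear = herm_add_left herm_add_right herm_diff_left herm_diff_right
  herm_scale_left herm_scale_right

lemma herm_cnj_commute: "herm y x = cnj (herm x y)"
  by (simp add: herm_def algebra_simps)

lemma vec3_eq_iff: "(x::complex^3) = y \<longleftrightarrow> x$1 = y$1 \<and> x$2 = y$2 \<and> x$3 = y$3"
  by (simp add: vec_eq_iff forall_3)

definition vec3 :: "complex \<Rightarrow> complex \<Rightarrow> complex \<Rightarrow> complex^3" where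
  "vec3 a b c = (\<chi> i. if i = 1 then a else if i = 2 then b else c)"

lemma vec3_nth [simp]: "vec3 a b c $ 1 = a" "vec3 a b c $ 2 = b" "vec3 a b c $ 3 = c"
  by (simp_all add: vec3_def)

lemma vec3_eq_0_iff [simp]: "vec3 a b c = 0 \<longleftrightarrow> a = 0 \<and> b = 0 \<and> c = 0"
  by (simp add: vec3_eq_iff)

lemma real_vec_vec3 [simp]: "real_vec (vec3 a b c) \<longleftrightarrow> a \<in> \<real> \<and> b \<in> \<real> \<and> c \<in> \<real>"
  by (simp add: real_vec_def forall_3)

lemma herm_vec3_right [simp]: "herm x (vec3 a b c) = x$1 * cnj c + x$2 * cnj b + x$3 * cnj a"
  by (simp add: herm_def)

lemma null_coord2_zero_if_coord3_zero:
  assumes "herm R R = 0" "R$3 = 0"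
  shows "R$2 = 0"
proof -
  have "R$2 * cnj (R$2) = 0" using assms by (simp add: herm_def)
  then show ?thesis by simp
qed

lemma orthogonal_null_lifts_same_point:
  assumes P: "null_lift P" and Q: "null_lift Q" and PQ: "herm P Q = 0"
  shows "same_point P Q"
proof -
  have PP: "herm P P = 0" "P \<noteq> 0" and QQ: "herm Q Q = 0" "Q \<noteq> 0"
    using P Q by (auto simp: null_lift_def)
  show ?thesis
  proof (cases "P$3 = 0")
    case True
    then have P2: "P$2 = 0" using null_coord2_zero_if_coord3_zero PP by blast
    then have P1: "P$1 \<noteq> 0" using PP True by (auto simp: vec3_eq_iff)
    have "P$1 * cnj (Q$3) = 0" using PQ True P2 by (simp add: herm_def)
    then have Q3: "Q$3 = 0" using P1 by simp
    then have Q2: "Q$2 = 0" using null_coord2_zero_if_coord3_zero QQ by blast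
    have "Q = (Q$1 / P$1) *s P" using P1 P2 Q2 Q3 True by (simp add: vec3_eq_iff)
    moreover have "Q$1 \<noteq> 0" using QQ Q2 Q3 by (auto simp: vec3_eq_iff)
    ultimately show ?thesis using P1 unfolding same_point_def by (intro exI[of _ "Q$1 / P$1"]) simp
  next
    case False
    define R where "R = Q - (Q$3 / P$3) *s P"
    have QP: "herm Q P = 0" using PQ herm_cnj_commute[of Q P] by simp
    have RR: "herm R R = 0" and RP: "herm R P = 0"
      unfolding R_def by (simp_all add: herm_sesquilinear PP QQ PQ QP)
    have R3: "R$3 = 0" and R2: "R$2 = 0"
      using False null_coord2_zero_if_coord3_zero[OF RR] by (simp_all add: R_def)
    then have "R$1 * cnj (P$3) = 0" using RP by (simp add: herm_def)
    then have "R = 0" using False R2 R3 by (simp add: vec3_eq_iff)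
    then have "Q = (Q$3 / P$3) *s P" by (simp add: R_def)
    then show ?thesis using QQ unfolding same_point_def by (metis vector_smult_lzero)
  qed
qed

lemma herm_nonzero_if_not_same_point:
  assumes "null_lift P" "null_lift Q" "\<not> same_point P Q"
  shows "herm P Q \<noteq> 0" "herm Q P \<noteq> 0"
  using orthogonal_null_lifts_same_point[OF assms(1,2)] assms(3) herm_cnj_commute[of P Q] by auto

lemma unitary21_herm: "unitary21 g \<Longrightarrow> herm (g *v V) (g *v W) = herm V W"
  by (simp add: unitary21_def)

lemma unitary21_surj:
  assumes "unitary21 g"
  shows "surj ((*v) g)"
proof -
  have "inj ((*v) g)"
  proof (rule linear_injective_0[THEN iffD2], simp, intro allI impI)
    fix w assume "g *v w = 0"
    then have "herm w V = 0" for V using unitary21_herm[OF assms, of w V] by simp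
    from this[of "vec3 1 0 0"] this[of "vec3 0 1 0"] this[of "vec3 0 0 1"]
    show "w = 0" by (simp add: vec3_eq_iff)
  qed
  then show ?thesis by (simp add: linear_injective_imp_surjective)
qed

lemma cross_ratio_unitary_scale:
  assumes "unitary21 g" "c1 \<noteq> 0" "c2 \<noteq> 0" "c3 \<noteq> 0" "c4 \<noteq> 0"
  shows "cross_ratio (c1 *s (g *v V1)) (c2 *s (g *v V2)) (c3 *s (g *v V3)) (c4 *s (g *v V4))
       = cross_ratio V1 V2 V3 V4"
proof -
  let ?K = "c3 * cnj c1 * c4 * cnj c2"
  have K: "?K \<noteq> 0" using assms by simp
  have "cross_ratio (c1 *s (g *v V1)) (c2 *s (g *v V2)) (c3 *s (g *v V3)) (c4 *s (g *v V4))
      = (?K * (herm V3 V1 * herm V4 V2)) / (?K * (herm V4 V1 * herm V3 V2))"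
    unfolding cross_ratio_def by (simp add: herm_sesquilinear unitary21_herm[OF assms(1)] algebra_simps)
  also have "\<dots> = cross_ratio V1 V2 V3 V4"
    unfolding cross_ratio_def by (rule mult_divide_mult_cancel_left[OF K])
  finally show ?thesis .
qed

definition frame_matrix :: "complex^3 \<Rightarrow> complex^3 \<Rightarrow> complex^3 \<Rightarrow> complex^3^3" where
  "frame_matrix A B C = (\<chi> i j. if j = 1 then A$i else if j = 2 then B$i else C$i)"

lemma frame_matrix_mult: "frame_matrix A B C *v V = V$1 *s A + V$2 *s B + V$3 *s C"
  by (simp add: vec_eq_iff frame_matrix_def matrix_vector_mult_def sum_3 algebra_simps)

lemma unitary21_frame_matrix:
  assumes "herm A A = 0" "herm C C = 0" "herm A C = 1" "herm B B = 1" "herm A B = 0" "herm C B = 0"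
  shows "unitary21 (frame_matrix A B C)"
proof -
  have "herm C A = 1" "herm B A = 0" "herm B C = 0"
    using assms herm_cnj_commute[of A C] herm_cnj_commute[of A B] herm_cnj_commute[of C B] by auto
  then show ?thesis unfolding unitary21_def frame_matrix_mult
    by (simp add: herm_sesquilinear assms) (simp add: herm_def algebra_simps)
qed

text \<open>With A = a - c, S = a + c (and B, T likewise), the cone equations read A^2 = 2 b^2 + S^2,
  and the pairing is ((2 b q + S T) - A B) / 2; Cauchy-Schwarz gives |2 b q + S T| \<le> |A B|.\<close>
lemma lightcone_inner_sign:
  fixes a b c p q u :: real
  assumes "b\<^sup>2 + 2 * a * c = 0" "q\<^sup>2 + 2 * p * u = 0"
  shows "(a * u + b * q + c * p) * ((a - c) * (p - u)) \<le> 0"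
proof -
  define U where "U = 2 * b * q + (a + c) * (p + u)"
  define V where "V = (a - c) * (p - u)"
  have "(a - c)\<^sup>2 = 2 * b\<^sup>2 + (a + c)\<^sup>2" "(p - u)\<^sup>2 = 2 * q\<^sup>2 + (p + u)\<^sup>2"
    using assms by (simp_all add: power2_eq_square algebra_simps)
  then have "V\<^sup>2 = (2 * b\<^sup>2 + (a + c)\<^sup>2) * (2 * q\<^sup>2 + (p + u)\<^sup>2)"
    unfolding V_def by (simp add: power_mult_distrib)
  then have "V\<^sup>2 - U\<^sup>2 = 2 * (b * (p + u) - q * (a + c))\<^sup>2"
    unfolding U_def by (simp add: power2_eq_square algebra_simps)
  then have "\<bar>U\<bar> \<le> \<bar>V\<bar>"
    by (metis abs_le_square_iff diff_ge_0_iff_ge mult_nonneg_nonneg zero_le_numeral zero_le_power2)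
  then have "U * V \<le> V * V"
    by (metis abs_ge_self abs_mult abs_mult_self_eq abs_ge_zero mult_right_mono order_trans)
  moreover have "2 * ((a * u + b * q + c * p) * V) = U * V - V * V"
    unfolding U_def V_def by (simp add: algebra_simps)
  ultimately show ?thesis unfolding V_def by linarith
qed

lemma cartan_unitary_scale:
  assumes "unitary21 g" "c1 \<noteq> 0" "c2 \<noteq> 0" "c3 \<noteq> 0"
  shows "cartan (c1 *s (g *v V1)) (c2 *s (g *v V2)) (c3 *s (g *v V3)) = cartan V1 V2 V3"
proof -
  have "- (herm (c1 *s (g *v V1)) (c2 *s (g *v V2)) * herm (c2 *s (g *v V2)) (c3 *s (g *v V3))
          * herm (c3 *s (g *v V3)) (c1 *s (g *v V1)))
      = (c1 * cnj c1) * (c2 * cnj c2) * (c3 * cnj c3) * - (herm V1 V2 * herm V2 V3 * herm V3 V1)"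
    by (simp add: herm_sesquilinear unitary21_herm[OF assms(1)] algebra_simps)
  also have "\<dots> = of_real ((cmod c1 * cmod c2 * cmod c3)\<^sup>2) * - (herm V1 V2 * herm V2 V3 * herm V3 V1)"
    by (simp only: power_mult_distrib of_real_mult complex_norm_square)
  finally have "cartan (c1 *s (g *v V1)) (c2 *s (g *v V2)) (c3 *s (g *v V3))
      = Arg (of_real ((cmod c1 * cmod c2 * cmod c3)\<^sup>2) * - (herm V1 V2 * herm V2 V3 * herm V3 V1))"
    unfolding cartan_def by (simp only:)
  also have "\<dots> = cartan V1 V2 V3"
    unfolding cartan_def by (rule Arg_times_of_real) (use assms in simp)
  finally show ?thesis .
qed

lemma herm_real_vec:
  assumes "real_vec v" "real_vec w"
  shows "herm v w = of_real (Re (v$1) * Re (w$3) + Re (v$2) * Re (w$2) + Re (v$3) * Re (w$1))"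
  using assms unfolding real_vec_def by (simp add: herm_def complex_eq_iff complex_is_Real_iff)

lemma real_null_vec_coords:
  assumes "real_vec v" "v \<noteq> 0" "herm v v = 0"
  shows "(Re (v$2))\<^sup>2 + 2 * Re (v$1) * Re (v$3) = 0" and "Re (v$1) \<noteq> Re (v$3)"
proof -
  have "Re (v$1) * Re (v$3) + Re (v$2) * Re (v$2) + Re (v$3) * Re (v$1) = 0"
    using assms(3) herm_real_vec[OF assms(1,1)] by (metis of_real_eq_0_iff)
  then show null: "(Re (v$2))\<^sup>2 + 2 * Re (v$1) * Re (v$3) = 0"
    by (simp add: power2_eq_square algebra_simps)
  show "Re (v$1) \<noteq> Re (v$3)"
  proof
    assume "Re (v$1) = Re (v$3)"
    with null have "(Re (v$2))\<^sup>2 + 2 * (Re (v$1))\<^sup>2 = 0" by (simp add: power2_eq_square)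
    then have "(Re (v$2))\<^sup>2 = 0" "(Re (v$1))\<^sup>2 = 0"
      using zero_le_power2[of "Re (v$2)"] zero_le_power2[of "Re (v$1)"] by linarith+
    with \<open>Re (v$1) = Re (v$3)\<close> have "Re (v$1) = 0" "Re (v$2) = 0" "Re (v$3) = 0" by simp_all
    then have "v = 0"
      using assms(1) unfolding real_vec_def by (simp add: vec3_eq_iff complex_eq_iff complex_is_Real_iff)
    with assms(2) show False by contradiction
  qed
qed

lemma real_null_vecs_herm_sign:
  assumes v: "real_vec v" "v \<noteq> 0" "herm v v = 0" and w: "real_vec w" "w \<noteq> 0" "herm w w = 0"
    and "herm v w \<noteq> 0"
  shows "Re (herm v w) * ((Re (v$1) - Re (v$3)) * (Re (w$1) - Re (w$3))) < 0"
proof -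
  have "Re (herm v w) * ((Re (v$1) - Re (v$3)) * (Re (w$1) - Re (w$3))) \<le> 0"
    unfolding herm_real_vec[OF v(1) w(1)] Re_complex_of_real
    by (rule lightcone_inner_sign[OF real_null_vec_coords(1)[OF v] real_null_vec_coords(1)[OF w]])
  moreover have "Re (herm v w) \<noteq> 0"
    using assms(7) herm_real_vec[OF v(1) w(1)] by (metis Re_complex_of_real of_real_0)
  ultimately show ?thesis using real_null_vec_coords(2)[OF v] real_null_vec_coords(2)[OF w]
    by (simp add: less_le)
qed

lemma cartan_real_null_vecs:
  assumes v1: "real_vec v1" "v1 \<noteq> 0" "herm v1 v1 = 0"
    and v2: "real_vec v2" "v2 \<noteq> 0" "herm v2 v2 = 0"
    and v3: "real_vec v3" "v3 \<noteq> 0" "herm v3 v3 = 0"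
    and "herm v1 v2 \<noteq> 0" "herm v2 v3 \<noteq> 0" "herm v3 v1 \<noteq> 0"
  shows "cartan v1 v2 v3 = 0"
proof -
  define s1 where "s1 = Re (v1$1) - Re (v1$3)"
  define s2 where "s2 = Re (v2$1) - Re (v2$3)"
  define s3 where "s3 = Re (v3$1) - Re (v3$3)"
  define h where "h = Re (herm v1 v2) * Re (herm v2 v3) * Re (herm v3 v1)"
  have "Re (herm v1 v2) * (s1 * s2) < 0" "Re (herm v2 v3) * (s2 * s3) < 0"
    "Re (herm v3 v1) * (s3 * s1) < 0"
    unfolding s1_def s2_def s3_def using assms by (simp_all add: real_null_vecs_herm_sign)
  then have "(Re (herm v1 v2) * (s1 * s2)) * (Re (herm v2 v3) * (s2 * s3)) * (Re (herm v3 v1) * (s3 * s1)) < 0"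
    by (meson mult_neg_neg mult_pos_neg)
  then have "h * (s1 * s2 * s3)\<^sup>2 < 0"
    unfolding h_def by (simp add: power2_eq_square mult_ac)
  then have "h < 0" by (simp add: mult_less_0_iff)
  moreover have "- (herm v1 v2 * herm v2 v3 * herm v3 v1) = of_real (- h)"
    unfolding h_def using v1(1) v2(1) v3(1) by (simp add: herm_real_vec)
  ultimately show ?thesis unfolding cartan_def by (simp only: Arg_of_real) simp
qed

lemma cross_ratio_real_vecs:
  "real_vec V1 \<Longrightarrow> real_vec V2 \<Longrightarrow> real_vec V3 \<Longrightarrow> real_vec V4 \<Longrightarrow>
    cross_ratio V1 V2 V3 V4 \<in> \<real>"
  unfolding cross_ratio_def by (simp add: herm_real_vec)

lemma on_RcircleE:
  assumes "on_Rcircle g P"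
  obtains v c where "real_vec v" "v \<noteq> 0" "herm v v = 0" "c \<noteq> 0" "P = c *s (g *v v)"
  using assms unfolding on_Rcircle_def same_point_def by blast

lemma on_RcircleI:
  "real_vec v \<Longrightarrow> v \<noteq> 0 \<Longrightarrow> herm v v = 0 \<Longrightarrow> c \<noteq> 0 \<Longrightarrow> P = c *s (g *v v) \<Longrightarrow>
    on_Rcircle g P"
  unfolding on_Rcircle_def same_point_def by blast

lemma on_common_Rcircle_invariants:
  assumes g: "unitary21 g"
    and "on_Rcircle g P1" "on_Rcircle g P2" "on_Rcircle g P3" "on_Rcircle g P4"
    and "herm P1 P2 \<noteq> 0" "herm P2 P3 \<noteq> 0" "herm P3 P1 \<noteq> 0"
  shows "cartan P1 P2 P3 = 0" "cross_ratio P1 P2 P3 P4 \<in> \<real>" "cross_ratio P1 P3 P2 P4 \<in> \<real>"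
proof -
  obtain v1 c1 where v1: "real_vec v1" "v1 \<noteq> 0" "herm v1 v1 = 0" "c1 \<noteq> 0" "P1 = c1 *s (g *v v1)"
    using assms(2) by (rule on_RcircleE)
  obtain v2 c2 where v2: "real_vec v2" "v2 \<noteq> 0" "herm v2 v2 = 0" "c2 \<noteq> 0" "P2 = c2 *s (g *v v2)"
    using assms(3) by (rule on_RcircleE)
  obtain v3 c3 where v3: "real_vec v3" "v3 \<noteq> 0" "herm v3 v3 = 0" "c3 \<noteq> 0" "P3 = c3 *s (g *v v3)"
    using assms(4) by (rule on_RcircleE)
  obtain v4 c4 where v4: "real_vec v4" "c4 \<noteq> 0" "P4 = c4 *s (g *v v4)"
    using assms(5) by (rule on_RcircleE)
  have "herm v1 v2 \<noteq> 0" "herm v2 v3 \<noteq> 0" "herm v3 v1 \<noteq> 0"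
    using assms(6-8) v1(5) v2(5) v3(5) by (auto simp: herm_sesquilinear unitary21_herm[OF g])
  then show "cartan P1 P2 P3 = 0"
    using cartan_real_null_vecs[OF v1(1-3) v2(1-3) v3(1-3)] cartan_unitary_scale[OF g]
      v1(4,5) v2(4,5) v3(4,5) by simp
  show "cross_ratio P1 P2 P3 P4 \<in> \<real>" "cross_ratio P1 P3 P2 P4 \<in> \<real>"
    using cross_ratio_unitary_scale[OF g] cross_ratio_real_vecs v1 v2 v3 v4 by simp_all
qed

lemma null_frame_completion:
  assumes E11: "herm E1 E1 = 0" and E33: "herm E3 E3 = 0" and E13: "herm E1 E3 = 1"
    and PP: "herm P P = 0" and PE1: "herm P E1 = 1" and PE3: "herm P E3 = - of_real r" and "r > 0"
  obtains g where "unitary21 g" "g *v vec3 1 0 0 = E1" "g *v vec3 0 0 1 = E3"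
    "P = g *v vec3 (- of_real r) (of_real (sqrt (2 * r))) 1"
proof -
  define \<rho> where "\<rho> = sqrt (2 * r)"
  have "\<rho> > 0" using \<open>r > 0\<close> by (simp add: \<rho>_def)
  have \<rho>\<rho>: "2 * of_real r = (of_real \<rho> * of_real \<rho> :: complex)"
    using \<open>r > 0\<close> by (simp flip: of_real_mult add: \<rho>_def) simp
  have E31: "herm E3 E1 = 1" using herm_cnj_commute[of E1 E3] E13 by simp
  have E1P: "herm E1 P = 1" using herm_cnj_commute[of P E1] PE1 by simp
  have E3P: "herm E3 P = - of_real r"
    by (metis PE3 herm_cnj_commute complex_cnj_complex_of_real complex_cnj_minus)
  define N where "N = (1 / of_real \<rho>) *s (P - (- of_real r) *s E1 - E3)"
  have P: "P = (- of_real r) *s E1 + of_real \<rho> *s N + E3"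
    using \<open>\<rho> > 0\<close> by (simp add: N_def vec_eq_iff)
  have NE1: "herm E1 N = 0" and NE3: "herm E3 N = 0"
    using \<open>\<rho> > 0\<close> by (simp_all add: N_def herm_sesquilinear E11 E13 E31 E33 E1P E3P)
  have "herm N N = 1"
    using \<open>\<rho> > 0\<close> herm_cnj_commute[of E1 N] herm_cnj_commute[of E3 N]
    by (simp add: N_def herm_sesquilinear PP E11 E13 E31 E33 E1P E3P PE1 PE3) (simp add: \<rho>\<rho>)
  show thesis
  proof
    show "unitary21 (frame_matrix E1 N E3)"
      using unitary21_frame_matrix E11 E33 E13 \<open>herm N N = 1\<close> NE1 NE3 by blast
  qed (simp_all add: frame_matrix_mult P \<rho>_def)
qed

text \<open>Once P1, P2 are rescaled so that herm P3 E1 = 1 = herm E1 E3, the vanishing of the Cartan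
  invariant says that -cnj (herm P3 E3) is a positive multiple of the triple product, hence
  herm P3 E3 is a negative real number.\<close>
lemma cartan_zero_standard_position:
  assumes "null_lift P1" "null_lift P2" "null_lift P3"
    and h12: "herm P1 P2 \<noteq> 0" and h23: "herm P2 P3 \<noteq> 0" and h31: "herm P3 P1 \<noteq> 0"
    and cartan: "cartan P1 P2 P3 = 0"
  obtains g c1 c2 r where "unitary21 g" "c1 \<noteq> 0" "c2 \<noteq> 0" "r > 0"
    "P1 = c1 *s (g *v vec3 1 0 0)" "P2 = c2 *s (g *v vec3 0 0 1)"
    "P3 = g *v vec3 (- of_real r) (of_real (sqrt (2 * r))) 1"
proof -
  have null: "herm P1 P1 = 0" "herm P2 P2 = 0" "herm P3 P3 = 0"
    using assms(1-3) by (simp_all add: null_lift_def)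
  define t where "t = herm P3 P1"
  define E1 where "E1 = (1 / cnj t) *s P1"
  define s where "s = herm P2 E1"
  define E3 where "E3 = (1 / s) *s P2"
  have "t \<noteq> 0" using h31 by (simp add: t_def)
  then have "s \<noteq> 0" using h12 herm_cnj_commute[of P1 P2] by (simp add: s_def E1_def herm_sesquilinear)
  have P1: "P1 = cnj t *s E1" and P2: "P2 = s *s E3"
    using \<open>t \<noteq> 0\<close> \<open>s \<noteq> 0\<close> by (simp_all add: E1_def E3_def vec_eq_iff)
  have E11: "herm E1 E1 = 0" and E33: "herm E3 E3 = 0"
    by (simp_all add: E1_def E3_def herm_sesquilinear null)
  have E13: "herm E1 E3 = 1"
    using \<open>s \<noteq> 0\<close> herm_cnj_commute[of P2 E1] by (simp add: E3_def s_def herm_sesquilinear)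
  have P3E1: "herm P3 E1 = 1"
    using \<open>t \<noteq> 0\<close> by (simp add: E1_def t_def herm_sesquilinear)
  define a where "a = herm P3 E3"
  have E3P3: "herm E3 P3 = cnj a" using herm_cnj_commute[of P3 E3] by (simp add: a_def)
  have "- (herm P1 P2 * herm P2 P3 * herm P3 P1) = (t * cnj t) * (s * cnj s) * - cnj a"
    by (simp add: P1 P2 herm_sesquilinear E13 E3P3 P3E1 flip: t_def)
  also have "\<dots> = of_real ((cmod t * cmod s)\<^sup>2) * - cnj a"
    by (simp only: power_mult_distrib of_real_mult complex_norm_square)
  finally have "cartan P1 P2 P3 = Arg (of_real ((cmod t * cmod s)\<^sup>2) * - cnj a)"
    unfolding cartan_def by (simp only:)
  also have "\<dots> = Arg (- cnj a)"
    by (rule Arg_times_of_real) (use \<open>t \<noteq> 0\<close> \<open>s \<noteq> 0\<close> in simp)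
  finally have "Arg (- cnj a) = 0" using cartan by simp
  then have "a \<in> \<real>" "Re a \<le> 0" by (simp_all add: Arg_eq_0 Reals_cnj_iff)
  define r where "r = - Re a"
  have a: "a = - of_real r" using \<open>a \<in> \<real>\<close> by (simp add: r_def complex_eq_iff complex_is_Real_iff)
  have "a \<noteq> 0" using h23 by (simp add: P2 herm_sesquilinear E3P3)
  then have "r \<noteq> 0" using a by auto
  then have "r > 0" using \<open>Re a \<le> 0\<close> r_def by linarith
  obtain g where g: "unitary21 g" "g *v vec3 1 0 0 = E1" "g *v vec3 0 0 1 = E3"
    "P3 = g *v vec3 (- of_real r) (of_real (sqrt (2 * r))) 1"
    using null_frame_completion[OF E11 E33 E13 null(3) P3E1 a_def[symmetric, unfolded a] \<open>r > 0\<close>] .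
  show thesis
    by (rule that[of g "cnj t" s r])
      (use g \<open>t \<noteq> 0\<close> \<open>s \<noteq> 0\<close> \<open>r > 0\<close> in \<open>simp_all add: P1 P2\<close>)
qed

lemma null_lift_affine_chart:
  assumes g: "unitary21 g" and "null_lift P" and "herm P (g *v vec3 1 0 0) \<noteq> 0"
  obtains z \<xi> \<eta> where "z \<noteq> 0" "P = z *s (g *v vec3 \<xi> \<eta> 1)"
    "herm (vec3 \<xi> \<eta> 1) (vec3 \<xi> \<eta> 1) = 0"
proof -
  obtain w where w: "P = g *v w" using unitary21_surj[OF g] by (metis surjD)
  define z where "z = w$3"
  have "z \<noteq> 0" using assms(3) by (simp add: w unitary21_herm[OF g] z_def)
  define v where "v = vec3 (w$1 / z) (w$2 / z) 1"
  have "w = z *s v" using \<open>z \<noteq> 0\<close> by (simp add: v_def z_def vec3_eq_iff)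
  then have P: "P = z *s (g *v v)" by (simp add: w vector_scalar_commute)
  have "herm v v = 0"
    using assms(2) \<open>z \<noteq> 0\<close> by (auto simp: null_lift_def P herm_sesquilinear unitary21_herm[OF g])
  then show thesis using that[OF \<open>z \<noteq> 0\<close> P[unfolded v_def]] unfolding v_def by blast
qed

lemma quadratic_relation_of_square_eq:
  fixes X1 X2 :: real
  assumes sq: "(1 + X1 - X2)\<^sup>2 = 4 * X1" and "X1 \<noteq> 0" "X2 \<noteq> 0"
  shows "X1 > 0" "X2 > 0" "- 2 * (X1 + X2) - 2 * X1 * X2 + X1\<^sup>2 + X2\<^sup>2 + 1 = 0"
proof -
  show "X1 > 0" using sq \<open>X1 \<noteq> 0\<close> zero_le_power2[of "1 + X1 - X2"] by linarith
  show "X2 > 0"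
  proof (rule ccontr)
    assume "\<not> X2 > 0"
    then have "(1 + X1)\<^sup>2 < (1 + X1 - X2)\<^sup>2"
      using \<open>X1 > 0\<close> \<open>X2 \<noteq> 0\<close> by (intro power_strict_mono) auto
    moreover have "(1 + X1)\<^sup>2 = 4 * X1 + (X1 - 1)\<^sup>2" by (simp add: power2_eq_square algebra_simps)
    ultimately show False using sq zero_le_power2[of "X1 - 1"] by linarith
  qed
  show "- 2 * (X1 + X2) - 2 * X1 * X2 + X1\<^sup>2 + X2\<^sup>2 + 1 = 0"
    using sq by (simp add: power2_eq_square algebra_simps)
qed

text \<open>Here X1 = -\<xi>/r and X2 = 1 - (\<xi> + \<rho>\<eta>)/r with \<rho> = sqrt (2 r), so real cross-ratios force
  \<xi>, \<eta> to be real, and the null condition 2 \<xi> + \<eta>^2 = 0 becomes (1 + X1 - X2)^2 = 4 X1.\<close>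
lemma cross_ratios_standard_position:
  fixes r :: real and \<xi> \<eta> :: complex
  defines "p3 \<equiv> vec3 (- of_real r) (of_real (sqrt (2 * r))) 1" and "p4 \<equiv> vec3 \<xi> \<eta> 1"
  assumes "r > 0" and null: "herm p4 p4 = 0"
    and X1_def: "X1 = cross_ratio (vec3 1 0 0) (vec3 0 0 1) p3 p4"
    and X2_def: "X2 = cross_ratio (vec3 1 0 0) p3 (vec3 0 0 1) p4"
    and "X1 \<in> \<real>" "X2 \<in> \<real>" "X1 \<noteq> 0" "X2 \<noteq> 0"
  shows "\<xi> \<in> \<real>" "\<eta> \<in> \<real>" "Re X1 > 0" "Re X2 > 0"
    "- 2 * (Re X1 + Re X2) - 2 * Re X1 * Re X2 + (Re X1)\<^sup>2 + (Re X2)\<^sup>2 + 1 = 0"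
proof -
  define \<rho> where "\<rho> = sqrt (2 * r)"
  have X1: "X1 = - \<xi> / of_real r" and X2: "X2 = 1 - (\<xi> + of_real \<rho> * \<eta>) / of_real r"
    using \<open>r > 0\<close> by (simp_all add: X1_def X2_def p3_def p4_def \<rho>_def cross_ratio_def field_simps)
  have "\<xi> = - of_real r * X1" using \<open>r > 0\<close> by (simp add: X1)
  then show "\<xi> \<in> \<real>" using \<open>X1 \<in> \<real>\<close> by simp
  then obtain x where \<xi>: "\<xi> = of_real x" by (rule Reals_cases)
  have "\<eta> = (of_real r * (1 - X2) - \<xi>) / of_real \<rho>"
    using \<open>r > 0\<close> by (simp add: X2 \<rho>_def field_simps)
  then show "\<eta> \<in> \<real>" using \<open>X2 \<in> \<real>\<close> \<open>\<xi> \<in> \<real>\<close> by simp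
  then obtain y where \<eta>: "\<eta> = of_real y" by (rule Reals_cases)
  have "of_real (2 * x + y\<^sup>2) = (0 :: complex)" using null by (simp add: p4_def \<xi> \<eta> power2_eq_square)
  then have null_xy: "2 * x + y\<^sup>2 = 0" by (simp only: of_real_eq_0_iff)
  have ReX1: "Re X1 = - x / r" and ReX2: "Re X2 = 1 - (x + \<rho> * y) / r"
    by (simp_all add: X1 X2 \<xi> \<eta> flip: of_real_mult of_real_add)
  have "(1 + Re X1 - Re X2)\<^sup>2 = \<rho>\<^sup>2 * y\<^sup>2 / r\<^sup>2"
    by (simp add: ReX1 ReX2 power_divide power_mult_distrib diff_divide_distrib add_divide_distrib)
  also have "\<dots> = 4 * Re X1"
    using \<open>r > 0\<close> null_xy by (simp add: \<rho>_def ReX1 power2_eq_square field_simps)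
  finally have sq: "(1 + Re X1 - Re X2)\<^sup>2 = 4 * Re X1" .
  have "Re X1 \<noteq> 0" "Re X2 \<noteq> 0"
    using \<open>X1 \<in> \<real>\<close> \<open>X2 \<in> \<real>\<close> \<open>X1 \<noteq> 0\<close> \<open>X2 \<noteq> 0\<close>
    by (auto simp: complex_eq_iff complex_is_Real_iff)
  from quadratic_relation_of_square_eq[OF sq this]
  show "Re X1 > 0" "Re X2 > 0"
    "- 2 * (Re X1 + Re X2) - 2 * Re X1 * Re X2 + (Re X1)\<^sup>2 + (Re X2)\<^sup>2 + 1 = 0" by simp_all
qed

lemma common_Rcircle_of_cartan_zero:
  assumes null: "null_lift P1" "null_lift P2" "null_lift P3" "null_lift P4"
    and h12: "herm P1 P2 \<noteq> 0" and h23: "herm P2 P3 \<noteq> 0" and h31: "herm P3 P1 \<noteq> 0"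
    and h41: "herm P4 P1 \<noteq> 0" and h42: "herm P4 P2 \<noteq> 0" and h43: "herm P4 P3 \<noteq> 0"
    and "cartan P1 P2 P3 = 0"
    and X1_def: "X1 = cross_ratio P1 P2 P3 P4" and X2_def: "X2 = cross_ratio P1 P3 P2 P4"
    and "X1 \<in> \<real>" "X2 \<in> \<real>"
  shows "\<exists>g. unitary21 g \<and> on_Rcircle g P1 \<and> on_Rcircle g P2 \<and> on_Rcircle g P3 \<and> on_Rcircle g P4"
    and "Re X1 > 0" "Re X2 > 0" "- 2 * (Re X1 + Re X2) - 2 * Re X1 * Re X2 + (Re X1)\<^sup>2 + (Re X2)\<^sup>2 + 1 = 0"
proof -
  obtain g c1 c2 r where g: "unitary21 g" and "c1 \<noteq> 0" "c2 \<noteq> 0" "r > 0"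
    and P1: "P1 = c1 *s (g *v vec3 1 0 0)" and P2: "P2 = c2 *s (g *v vec3 0 0 1)"
    and P3: "P3 = g *v vec3 (- of_real r) (of_real (sqrt (2 * r))) 1"
    using cartan_zero_standard_position[OF null(1-3) h12 h23 h31 \<open>cartan P1 P2 P3 = 0\<close>] .
  have "herm P4 (g *v vec3 1 0 0) \<noteq> 0" using h41 by (simp add: P1 herm_sesquilinear)
  then obtain z \<xi> \<eta> where "z \<noteq> 0" and P4: "P4 = z *s (g *v vec3 \<xi> \<eta> 1)"
    and null4: "herm (vec3 \<xi> \<eta> 1) (vec3 \<xi> \<eta> 1) = 0"
    using null_lift_affine_chart[OF g null(4)] by blast
  define p3 where "p3 = vec3 (- of_real r) (of_real (sqrt (2 * r))) 1"
  have P3': "P3 = 1 *s (g *v p3)" by (simp add: P3 p3_def)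
  have X1: "X1 = cross_ratio (vec3 1 0 0) (vec3 0 0 1) p3 (vec3 \<xi> \<eta> 1)"
    and X2: "X2 = cross_ratio (vec3 1 0 0) p3 (vec3 0 0 1) (vec3 \<xi> \<eta> 1)"
    unfolding X1_def X2_def P1 P2 P3' P4
    by (rule cross_ratio_unitary_scale[OF g]; use \<open>c1 \<noteq> 0\<close> \<open>c2 \<noteq> 0\<close> \<open>z \<noteq> 0\<close> in simp)+
  have "X1 \<noteq> 0" "X2 \<noteq> 0"
    using h12 h23 h31 h41 h42 h43 herm_cnj_commute[of P1 P2] herm_cnj_commute[of P2 P3]
    by (auto simp: X1_def X2_def cross_ratio_def)
  note standard =
    cross_ratios_standard_position[OF \<open>r > 0\<close> null4 X1[unfolded p3_def] X2[unfolded p3_def]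
      \<open>X1 \<in> \<real>\<close> \<open>X2 \<in> \<real>\<close> this]
  then show "Re X1 > 0" "Re X2 > 0"
    "- 2 * (Re X1 + Re X2) - 2 * Re X1 * Re X2 + (Re X1)\<^sup>2 + (Re X2)\<^sup>2 + 1 = 0"
    by simp_all
  show "\<exists>g. unitary21 g \<and> on_Rcircle g P1 \<and> on_Rcircle g P2 \<and> on_Rcircle g P3 \<and> on_Rcircle g P4"
  proof (intro exI conjI)
    show "unitary21 g" by (fact g)
    show "on_Rcircle g P1"
      by (rule on_RcircleI[where v = "vec3 1 0 0" and c = c1]) (simp_all add: P1 \<open>c1 \<noteq> 0\<close>)
    show "on_Rcircle g P2"
      by (rule on_RcircleI[where v = "vec3 0 0 1" and c = c2]) (simp_all add: P2 \<open>c2 \<noteq> 0\<close>)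
    show "on_Rcircle g P3"
      by (rule on_RcircleI[where v = p3 and c = 1])
        (use \<open>r > 0\<close> in \<open>simp_all add: P3 p3_def flip: of_real_mult, simp\<close>)
    show "on_Rcircle g P4"
      by (rule on_RcircleI[where v = "vec3 \<xi> \<eta> 1" and c = z])
        (use null4 standard in \<open>simp_all add: P4 \<open>z \<noteq> 0\<close>\<close>)
  qed
qed

theorem theorem3p3:
  fixes P1 P2 P3 P4 :: "complex^3"
  assumes "null_lift P1" "null_lift P2" "null_lift P3" "null_lift P4"
    and "\<not> same_point P1 P2" "\<not> same_point P1 P3" "\<not> same_point P1 P4"
    and "\<not> same_point P2 P3" "\<not> same_point P2 P4" "\<not> same_point P3 P4"
  shows "(\<exists>g. unitary21 g \<and> on_Rcircle g P1 \<and> on_Rcircle g P2 \<and>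
                 on_Rcircle g P3 \<and> on_Rcircle g P4)
    \<longleftrightarrow>
    (cartan P1 P2 P3 = 0 \<and>
     (let X1 = cross_ratio P1 P2 P3 P4; X2 = cross_ratio P1 P3 P2 P4 in
        X1 \<in> \<real> \<and> X2 \<in> \<real> \<and> Re X1 > 0 \<and> Re X2 > 0 \<and>
        - 2 * (Re X1 + Re X2) - 2 * Re X1 * Re X2 + (Re X1)\<^sup>2 + (Re X2)\<^sup>2 + 1 = 0))"
proof -
  have nonorth: "herm P1 P2 \<noteq> 0" "herm P2 P3 \<noteq> 0" "herm P3 P1 \<noteq> 0"
    "herm P4 P1 \<noteq> 0" "herm P4 P2 \<noteq> 0" "herm P4 P3 \<noteq> 0"
    using herm_nonzero_if_not_same_point(1)[OF assms(1,2,5)] herm_nonzero_if_not_same_point(1)[OF assms(2,3,8)]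
      herm_nonzero_if_not_same_point(2)[OF assms(1,3,6)] herm_nonzero_if_not_same_point(2)[OF assms(1,4,7)]
      herm_nonzero_if_not_same_point(2)[OF assms(2,4,9)] herm_nonzero_if_not_same_point(2)[OF assms(3,4,10)]
    by simp_all
  show ?thesis unfolding Let_def
    using common_Rcircle_of_cartan_zero[OF assms(1-4) nonorth _ refl refl]
      on_common_Rcircle_invariants[OF _ _ _ _ _ nonorth(1-3)]
    by blast
qed

end
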